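(* Every (fork, co-cricket)-free graph $G$ satisfies $\chi(G)\le\omega(G)^2$.
   Context: All graphs are finite and simple; $\chi$ is chromatic number, $\omega$ clique number. The fork is obtained from $K_{1,3}$ by subdividing one edge once. The co-cricket is the disjoint union of a diamond ($K_4$ minus an edge) and an isolated vertex. $G$ is $(H_1,H_2)$-free if it has no induced subgraph isomorphic to $H_1$ or $H_2$. *)

theory Defs
  imports Main
begin

definition graph :: "'a set \<Rightarrow> ('a \<Rightarrow> 'a \<Rightarrow> bool) \<Rightarrow> bool" where
  "graph V E \<longleftrightarrow> finite V \<and> (\<forall>x y. E x y \<longrightarrow> x \<in> V \<and> y \<in> V)
     \<and> (\<forall>x y. E x y \<longrightarrow> E y x) \<and> (\<forall>x. \<not> E x x)"

definition has_induced :: "'a set \<Rightarrow> ('a \<Rightarrow> 'a \<Rightarrow> bool) \<Rightarrow> nat \<Rightarrow> (nat \<Rightarrow> nat \<Rightarrow> bool) \<Rightarrow> bool" where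
  "has_induced V E n F \<longleftrightarrow> (\<exists>f. inj_on f {0..<n} \<and> f ` {0..<n} \<subseteq> V
     \<and> (\<forall>i<n. \<forall>j<n. F i j \<longleftrightarrow> E (f i) (f j)))"

text \<open>Fork: K_{1,3} with centre 0 and leaves 1,2,3, edge 0-3 subdivided by vertex 4.\<close>
definition fork_edge :: "nat \<Rightarrow> nat \<Rightarrow> bool" where
  "fork_edge i j \<longleftrightarrow> {i, j} \<in> {{0,1}, {0,2}, {0,4}, {4,3}}"

text \<open>Co-cricket: diamond (K4 on 0..3 minus the edge 2-3) plus isolated vertex 4.\<close>
definition cocricket_edge :: "nat \<Rightarrow> nat \<Rightarrow> bool" where
  "cocricket_edge i j \<longleftrightarrow> {i, j} \<in> {{0,1}, {0,2}, {0,3}, {1,2}, {1,3}}"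

definition clique :: "('a \<Rightarrow> 'a \<Rightarrow> bool) \<Rightarrow> 'a set \<Rightarrow> bool" where
  "clique E K \<longleftrightarrow> (\<forall>x\<in>K. \<forall>y\<in>K. x \<noteq> y \<longrightarrow> E x y)"

definition clique_number :: "'a set \<Rightarrow> ('a \<Rightarrow> 'a \<Rightarrow> bool) \<Rightarrow> nat" where
  "clique_number V E = Max {card K | K. K \<subseteq> V \<and> clique E K}"

definition proper_colouring :: "'a set \<Rightarrow> ('a \<Rightarrow> 'a \<Rightarrow> bool) \<Rightarrow> nat \<Rightarrow> ('a \<Rightarrow> nat) \<Rightarrow> bool" where
  "proper_colouring V E k c \<longleftrightarrow> c ` V \<subseteq> {0..<k} \<and> (\<forall>x\<in>V. \<forall>y\<in>V. E x y \<longrightarrow> c x \<noteq> c y)"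

definition chromatic_number :: "'a set \<Rightarrow> ('a \<Rightarrow> 'a \<Rightarrow> bool) \<Rightarrow> nat" where
  "chromatic_number V E = (LEAST k. \<exists>c. proper_colouring V E k c)"

end

theory Submission
  imports Defs
begin

text \<open>
  Pick a vertex v. Its neighbourhood has clique number at most
  \<open>\<omega> - 1\<close> and is coloured with \<open>(\<omega> - 1)\<^sup>2\<close> colours by induction. Its non-neighbourhood contains
  no induced diamond, since such a diamond together with v would be an induced co-cricket; and a
  fork-free, diamond-free graph with clique number at most k is \<open>(2k - 1)\<close>-colourable. As
  \<open>(\<omega> - 1)\<^sup>2 + (2\<omega> - 1) = \<omega>\<^sup>2\<close>, the two colourings with disjoint palettes suffice.

  For the diamond-free bound, a vertex of degree below \<open>2k - 1\<close> is coloured greedily. If all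
  degrees are at least \<open>2k - 1\<close>, then diamond-freeness and the clique bound force every edge to
  have at least k private neighbours at each end, which together with fork-freeness rules out
  triangles. In a triangle-free fork-free graph of minimum degree at least 3 the vertices at
  distance 1, 2, 3 from a vertex v form independent sets and there is nothing at distance 4,
  so the component of v is bipartite; colour it with 2 colours and recurse on the rest.
\<close>

lemma not_has_induced_subset:
  "\<not> has_induced B E n F \<Longrightarrow> A \<subseteq> B \<Longrightarrow> \<not> has_induced A E n F"
  unfolding has_induced_def by (meson subset_trans)

lemma has_induced_listI:
  assumes "distinct xs" "length xs = n" "set xs \<subseteq> V"
    and "\<forall>i<n. \<forall>j<n. F i j \<longleftrightarrow> E (xs ! i) (xs ! j)"
  shows "has_induced V E n F"
  unfolding has_induced_def
proof (intro exI conjI)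
  show "inj_on ((!) xs) {0..<n}"
    using assms(1,2) by (auto simp: inj_on_def nth_eq_iff_index_eq)
  show "(!) xs ` {0..<n} \<subseteq> V"
    using assms(2,3) by auto
qed (fact assms(4))

lemma proper_colouring_empty: "proper_colouring {} E k c"
  by (simp add: proper_colouring_def)

lemma proper_colouring_mono: "proper_colouring V E k c \<Longrightarrow> k \<le> k' \<Longrightarrow> proper_colouring V E k' c"
  unfolding proper_colouring_def by fastforce

lemma proper_colouring_Un_shift:
  assumes c: "proper_colouring A E a c" and d: "proper_colouring (S - A) E b d"
  shows "proper_colouring S E (a + b) (\<lambda>x. if x \<in> A then c x else a + d x)"
proof -
  have "c x < a" if "x \<in> A" for x
    using c that unfolding proper_colouring_def by auto
  moreover have "d x < b" if "x \<in> S - A" for x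
    using d that unfolding proper_colouring_def by auto
  moreover have "c x \<noteq> c y" if "x \<in> A" "y \<in> A" "E x y" for x y
    using c that unfolding proper_colouring_def by auto
  moreover have "d x \<noteq> d y" if "x \<in> S - A" "y \<in> S - A" "E x y" for x y
    using d that unfolding proper_colouring_def by auto
  ultimately show ?thesis
    unfolding proper_colouring_def by (auto simp: image_subset_iff) fastforce+
qed

locale simple_graph =
  fixes E :: "'a \<Rightarrow> 'a \<Rightarrow> bool"
  assumes sym: "E x y \<Longrightarrow> E y x"
    and irrefl: "\<not> E x x"
begin

lemma adjacent_commute: "E x y \<longleftrightarrow> E y x"
  using sym by blast

lemma has_induced_fork:
  assumes "{c, p, q, r, w} \<subseteq> S" "E c p" "E c q" "E c r" "E r w" "p \<noteq> q"
    "\<not> E p q" "\<not> E p r" "\<not> E q r" "\<not> E c w" "\<not> E p w" "\<not> E q w"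
  shows "has_induced S E 5 fork_edge"
proof (rule has_induced_listI[of "[c, p, q, w, r]"])
  have "E p c" "E q c" "E r c" "E w r" "\<not> E q p" "\<not> E r p" "\<not> E r q" "\<not> E w c" "\<not> E w p" "\<not> E w q"
    using assms(2-) sym by blast+
  with assms(2-) irrefl show "distinct [c, p, q, w, r]"
    and "\<forall>i<5. \<forall>j<5. fork_edge i j \<longleftrightarrow> E ([c, p, q, w, r] ! i) ([c, p, q, w, r] ! j)"
    by (auto simp: All_less_Suc numeral_eq_Suc fork_edge_def doubleton_eq_iff)
qed (use assms(1) in auto)

lemma has_induced_cocricket:
  assumes "{a, b, c, d, v} \<subseteq> S" "E a b" "E a c" "E a d" "E b c" "E b d" "c \<noteq> d" "\<not> E c d"
    "\<not> E v a" "\<not> E v b" "\<not> E v c" "\<not> E v d"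
  shows "has_induced S E 5 cocricket_edge"
proof (rule has_induced_listI[of "[a, b, c, d, v]"])
  have "E b a" "E c a" "E d a" "E c b" "E d b" "\<not> E d c" "\<not> E a v" "\<not> E b v" "\<not> E c v" "\<not> E d v"
    using assms(2-) sym by blast+
  with assms(2-) irrefl show "distinct [a, b, c, d, v]"
    and "\<forall>i<5. \<forall>j<5. cocricket_edge i j \<longleftrightarrow> E ([a, b, c, d, v] ! i) ([a, b, c, d, v] ! j)"
    by (auto simp: All_less_Suc numeral_eq_Suc cocricket_edge_def doubleton_eq_iff)
qed (use assms(1) in auto)

definition neighbours :: "'a set \<Rightarrow> 'a \<Rightarrow> 'a set" where
  "neighbours S x = {y \<in> S. E x y}"

definition clique_bounded :: "'a set \<Rightarrow> nat \<Rightarrow> bool" where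
  "clique_bounded S k \<longleftrightarrow> (\<forall>K \<subseteq> S. clique E K \<longrightarrow> card K \<le> k)"

definition diamond_free :: "'a set \<Rightarrow> bool" where
  "diamond_free S \<longleftrightarrow> (\<forall>a\<in>S. \<forall>b\<in>S. \<forall>c\<in>S. \<forall>d\<in>S.
     E a b \<longrightarrow> E a c \<longrightarrow> E a d \<longrightarrow> E b c \<longrightarrow> E b d \<longrightarrow> c \<noteq> d \<longrightarrow> E c d)"

definition common_neighbours :: "'a set \<Rightarrow> 'a \<Rightarrow> 'a \<Rightarrow> 'a set" where
  "common_neighbours S x y = {z \<in> S. E x z \<and> E y z}"

definition private_neighbours :: "'a set \<Rightarrow> 'a \<Rightarrow> 'a \<Rightarrow> 'a set" where
  "private_neighbours S x y = {z \<in> S. E x z \<and> z \<noteq> y \<and> \<not> E y z}"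

lemma clique_insert: "clique E (insert v K) \<longleftrightarrow> clique E K \<and> (\<forall>y \<in> K - {v}. E v y)"
  unfolding clique_def using sym by blast

lemma clique_bounded_subset: "clique_bounded S k \<Longrightarrow> A \<subseteq> S \<Longrightarrow> clique_bounded A k"
  unfolding clique_bounded_def by blast

lemma diamond_free_subset: "diamond_free S \<Longrightarrow> A \<subseteq> S \<Longrightarrow> diamond_free A"
  unfolding diamond_free_def by blast

lemma clique_bounded_clique_number:
  assumes "finite V"
  shows "clique_bounded V (clique_number V E)"
  unfolding clique_bounded_def clique_number_def
proof (intro allI impI)
  fix K assume "K \<subseteq> V" "clique E K"
  moreover have "finite {card K | K. K \<subseteq> V \<and> clique E K}"
    using assms by simp
  ultimately show "card K \<le> Max {card K | K. K \<subseteq> V \<and> clique E K}"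
    by (auto intro: Max_ge)
qed

lemma clique_bounded_neighbours:
  assumes "finite S" "clique_bounded S w" "v \<in> S"
  shows "clique_bounded (neighbours S v) (w - 1)"
  unfolding clique_bounded_def
proof (intro allI impI)
  fix K assume K: "K \<subseteq> neighbours S v" "clique E K"
  then have "clique E (insert v K)"
    by (auto simp: clique_insert neighbours_def)
  moreover have "insert v K \<subseteq> S"
    using K(1) assms(3) by (auto simp: neighbours_def)
  ultimately have "card (insert v K) \<le> w"
    using assms(2) unfolding clique_bounded_def by blast
  moreover have "v \<notin> K"
    using K(1) irrefl by (auto simp: neighbours_def)
  moreover have "finite K"
    using finite_subset[OF \<open>insert v K \<subseteq> S\<close> assms(1)] by simp
  ultimately show "card K \<le> w - 1"
    by simp
qed

lemma diamond_free_non_neighbours: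
  assumes "\<not> has_induced S E 5 cocricket_edge" "v \<in> S"
  shows "diamond_free (S - neighbours S v)"
  unfolding diamond_free_def
proof (intro ballI impI; rule ccontr)
  fix a b c d assume "a \<in> S - neighbours S v" "b \<in> S - neighbours S v"
    "c \<in> S - neighbours S v" "d \<in> S - neighbours S v"
    "E a b" "E a c" "E a d" "E b c" "E b d" "c \<noteq> d" "\<not> E c d"
  then have "has_induced S E 5 cocricket_edge"
    using assms(2) by (intro has_induced_cocricket[of a b c d v]) (auto simp: neighbours_def)
  with assms(1) show False ..
qed

lemma clique_common_neighbours:
  assumes "diamond_free S" "x \<in> S" "b \<in> S" "E x b"
  shows "clique E (insert x (insert b (common_neighbours S x b)))"
proof -
  have "clique E (common_neighbours S x b)"
    using assms unfolding clique_def diamond_free_def common_neighbours_def by blast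
  then show ?thesis
    using assms(4) by (auto simp: clique_insert common_neighbours_def)
qed

lemma card_common_neighbours:
  assumes "finite S" "diamond_free S" "clique_bounded S k" "x \<in> S" "b \<in> S" "E x b"
  shows "card (common_neighbours S x b) + 2 \<le> k"
proof -
  let ?K = "insert x (insert b (common_neighbours S x b))"
  have "x \<notin> common_neighbours S x b" "b \<notin> common_neighbours S x b" "x \<noteq> b"
    using irrefl assms(6) by (auto simp: common_neighbours_def)
  moreover have "finite (common_neighbours S x b)"
    using assms(1) by (simp add: common_neighbours_def)
  ultimately have "card ?K = card (common_neighbours S x b) + 2"
    by simp
  moreover have "?K \<subseteq> S"
    using assms(4,5) by (auto simp: common_neighbours_def)
  ultimately show ?thesis
    using assms(3) clique_common_neighbours[OF assms(2,4,5,6)]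
    unfolding clique_bounded_def by metis
qed

lemma card_private_neighbours:
  assumes "finite S" "diamond_free S" "clique_bounded S k" "x \<in> S" "b \<in> S" "E x b"
    and "2 * k - 1 \<le> card (neighbours S x)"
  shows "k \<le> card (private_neighbours S x b)"
proof -
  let ?C = "common_neighbours S x b" and ?P = "private_neighbours S x b"
  have "neighbours S x \<subseteq> insert b (?C \<union> ?P)"
    by (auto simp: neighbours_def common_neighbours_def private_neighbours_def)
  moreover have fin: "finite ?C" "finite ?P"
    using assms(1) by (simp_all add: common_neighbours_def private_neighbours_def)
  ultimately have "card (neighbours S x) \<le> card (insert b (?C \<union> ?P))"
    by (intro card_mono) simp_all
  also have "\<dots> \<le> Suc (card (?C \<union> ?P))"
    using fin by (simp add: card_insert_if)
  also have "\<dots> \<le> Suc (card ?C + card ?P)"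
    by (simp add: card_Un_le)
  finally show ?thesis
    using assms(7) card_common_neighbours[OF assms(1-6)] by linarith
qed

lemma common_not_adjacent_private:
  assumes "diamond_free S" "x \<in> S" "b \<in> S" "E x b"
    and "b' \<in> common_neighbours S x b" "s \<in> private_neighbours S x b"
  shows "\<not> E b' s"
proof
  assume "E b' s"
  have "b' \<in> S" "s \<in> S" "E x b'" "E b' b" "E x s" "b \<noteq> s" "\<not> E b s"
    using assms(5,6) sym by (auto simp: common_neighbours_def private_neighbours_def)
  with \<open>E b' s\<close> assms(1-4) show False
    unfolding diamond_free_def by blast
qed

lemma exists_non_neighbour:
  assumes "finite S" "diamond_free S" "clique_bounded S k" "x \<in> S"
    and "R \<subseteq> neighbours S x" "k \<le> card R" "c \<in> R"
  shows "\<exists>q\<in>R. q \<noteq> c \<and> \<not> E c q"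
proof (rule ccontr)
  assume "\<not> ?thesis"
  then have "R \<subseteq> insert c (common_neighbours S x c)"
    using assms(5) by (auto simp: neighbours_def common_neighbours_def)
  moreover have fin: "finite (common_neighbours S x c)"
    using assms(1) by (simp add: common_neighbours_def)
  ultimately have "card R \<le> card (insert c (common_neighbours S x c))"
    by (intro card_mono) simp_all
  also have "\<dots> \<le> Suc (card (common_neighbours S x c))"
    using fin by (simp add: card_insert_if)
  finally have "card R \<le> Suc (card (common_neighbours S x c))" .
  moreover have "c \<in> S" "E x c"
    using assms(5,7) by (auto simp: neighbours_def)
  then have "card (common_neighbours S x c) + 2 \<le> k"
    by (rule card_common_neighbours[OF assms(1-4)])
  ultimately show False
    using assms(6) by linarith
qed

lemma has_induced_fork_near_triangle:
  assumes S: "{x, b, b', u} \<subseteq> S" and edges: "E x b" "E x b'" "E b b'" "E b u"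
    and non_edges: "\<not> E x u" "\<not> E b' u"
    and R: "\<And>s. s \<in> R \<Longrightarrow> s \<in> S \<and> E x s \<and> \<not> E b s \<and> \<not> E b' s"
    and non_neighbour: "\<And>c. c \<in> R \<Longrightarrow> \<exists>q\<in>R. q \<noteq> c \<and> \<not> E c q" and "R \<noteq> {}"
  shows "has_induced S E 5 fork_edge"
proof (cases "\<exists>c\<in>R. E u c")
  case True
  then obtain c where c: "c \<in> R" "E u c" by blast
  then obtain q where q: "q \<in> R" "q \<noteq> c" "\<not> E c q" using non_neighbour by blast
  show ?thesis
  proof (cases "E u q")
    case True
    show ?thesis
      by (rule has_induced_fork[of u c q b b'])
        (use S edges non_edges c q R[OF c(1)] R[OF q(1)] True in \<open>auto simp: adjacent_commute\<close>)
  next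
    case False
    show ?thesis
      by (rule has_induced_fork[of x b' q c u])
        (use S edges non_edges c q R[OF c(1)] R[OF q(1)] False in \<open>auto simp: adjacent_commute\<close>)
  qed
next
  case False
  from \<open>R \<noteq> {}\<close> obtain c where c: "c \<in> R" by blast
  then obtain q where q: "q \<in> R" "q \<noteq> c" "\<not> E c q" using non_neighbour by blast
  show ?thesis
    by (rule has_induced_fork[of x c q b u])
      (use S edges non_edges c q R[OF c(1)] R[OF q(1)] False in \<open>auto simp: adjacent_commute\<close>)
qed

text \<open>
  Both ends of an edge \<open>xb\<close> of a triangle \<open>xbb'\<close> have at least k private neighbours, and these
  are all non-adjacent to \<open>b'\<close>; the lemma above then yields an induced fork.
\<close>
lemma triangle_free_if_min_degree:
  assumes fin: "finite S" and no_fork: "\<not> has_induced S E 5 fork_edge"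
    and diamond: "diamond_free S" and bounded: "clique_bounded S k"
    and deg: "\<forall>y\<in>S. 2 * k - 1 \<le> card (neighbours S y)"
    and S: "x \<in> S" "b \<in> S" "b' \<in> S" and triangle: "E x b" "E x b'" "E b b'"
  shows False
proof -
  have b': "b' \<in> common_neighbours S x b" "b' \<in> common_neighbours S b x"
    using S triangle by (auto simp: common_neighbours_def adjacent_commute)
  have "2 \<le> k"
    using card_common_neighbours[OF fin diamond bounded S(1,2) triangle(1)] by linarith
  have "k \<le> card (private_neighbours S b x)"
    using S triangle deg
    by (intro card_private_neighbours[OF fin diamond bounded]) (auto simp: adjacent_commute)
  with \<open>2 \<le> k\<close> obtain u where u: "u \<in> private_neighbours S b x"
    by fastforce
  have "\<not> E b' u"
    using common_not_adjacent_private[OF diamond S(2,1) _ b'(2) u] triangle(1)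
    by (simp add: adjacent_commute)
  with u have u: "u \<in> S" "E b u" "\<not> E x u" "\<not> E b' u"
    by (auto simp: private_neighbours_def adjacent_commute)
  define R where "R = private_neighbours S x b"
  have "k \<le> card R"
    unfolding R_def using S triangle deg
    by (intro card_private_neighbours[OF fin diamond bounded]) auto
  moreover have "R \<subseteq> neighbours S x"
    by (auto simp: R_def private_neighbours_def neighbours_def)
  ultimately have "\<exists>q\<in>R. q \<noteq> c \<and> \<not> E c q" if "c \<in> R" for c
    using exists_non_neighbour[OF fin diamond bounded S(1)] that by blast
  moreover have "s \<in> S \<and> E x s \<and> \<not> E b s \<and> \<not> E b' s" if "s \<in> R" for s
    using common_not_adjacent_private[OF diamond S(1,2) triangle(1) b'(1)] that
    by (auto simp: R_def private_neighbours_def)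
  moreover have "R \<noteq> {}"
    using \<open>k \<le> card R\<close> \<open>2 \<le> k\<close> by auto
  ultimately have "has_induced S E 5 fork_edge"
    using S triangle u by (intro has_induced_fork_near_triangle[of x b b' u]) auto
  with no_fork show False ..
qed

lemma proper_colouring_insert_vertex:
  assumes "finite S" "v \<in> S" and c: "proper_colouring (S - {v}) E k c"
    and "card (neighbours S v) < k"
  shows "\<exists>c'. proper_colouring S E k c'"
proof -
  have "finite (neighbours S v)"
    using assms(1) by (simp add: neighbours_def)
  then have "card (c ` neighbours S v) < card {0..<k}"
    using card_image_le[of "neighbours S v" c] assms(4) by simp
  then obtain col where col: "col \<in> {0..<k}" "col \<notin> c ` neighbours S v"
    by (meson card_mono finite_imageI \<open>finite (neighbours S v)\<close> not_le subsetI)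
  have "proper_colouring S E k (c(v := col))"
    unfolding proper_colouring_def
  proof (intro conjI ballI impI)
    show "(c(v := col)) ` S \<subseteq> {0..<k}"
      using c col(1) by (auto simp: proper_colouring_def)
  next
    fix x y assume "x \<in> S" "y \<in> S" "E x y"
    then show "(c(v := col)) x \<noteq> (c(v := col)) y"
      using c col(2) irrefl by (auto simp: proper_colouring_def neighbours_def adjacent_commute)
  qed
  then show ?thesis by blast
qed

lemma proper_colouring_Un_separated:
  assumes c: "proper_colouring C E k c" and d: "proper_colouring (S - C) E k d"
    and separated: "\<forall>x\<in>C. \<forall>y\<in>S - C. \<not> E x y"
  shows "proper_colouring S E k (\<lambda>x. if x \<in> C then c x else d x)"
  unfolding proper_colouring_def
proof (intro conjI ballI impI)
  show "(\<lambda>x. if x \<in> C then c x else d x) ` S \<subseteq> {0..<k}"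
    using c d by (auto simp: proper_colouring_def)
next
  fix x y assume "x \<in> S" "y \<in> S" "E x y"
  moreover have "x \<in> C \<longleftrightarrow> y \<in> C"
    using separated \<open>x \<in> S\<close> \<open>y \<in> S\<close> \<open>E x y\<close> sym by blast
  ultimately show "(if x \<in> C then c x else d x) \<noteq> (if y \<in> C then c y else d y)"
    using c d by (auto simp: proper_colouring_def)
qed

end

locale fork_free_layers = simple_graph +
  fixes S :: "'a set" and v :: 'a
  assumes no_fork: "\<not> has_induced S E 5 fork_edge"
    and triangle_free: "\<lbrakk>x \<in> S; y \<in> S; z \<in> S; E x y; E y z\<rbrakk> \<Longrightarrow> \<not> E x z"
    and min_degree: "y \<in> S \<Longrightarrow> 3 \<le> card (neighbours S y)"
    and root: "v \<in> S"
begin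

text \<open>
  The vertices at distance 1, 2 and 3 from v. By \<open>ball_closed\<close> nothing lies at distance 4, so
  \<open>ball\<close> is the component of v.
\<close>

definition layer1 :: "'a set" where
  "layer1 = neighbours S v"

definition layer2 :: "'a set" where
  "layer2 = {u \<in> S. u \<noteq> v \<and> \<not> E v u \<and> (\<exists>a\<in>layer1. E a u)}"

definition layer3 :: "'a set" where
  "layer3 = {w \<in> S. w \<noteq> v \<and> w \<notin> layer1 \<and> w \<notin> layer2 \<and> (\<exists>u\<in>layer2. E u w)}"

definition ball :: "'a set" where
  "ball = insert v (layer1 \<union> layer2 \<union> layer3)"

lemma layer1_iff: "a \<in> layer1 \<longleftrightarrow> a \<in> S \<and> E v a"
  by (simp add: layer1_def neighbours_def)

lemma layer1_independent: "a \<in> layer1 \<Longrightarrow> a' \<in> layer1 \<Longrightarrow> \<not> E a a'"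
  using triangle_free[of a v a'] root by (auto simp: layer1_iff adjacent_commute)

lemma layer2_adjacent_one_of_two:
  assumes "u \<in> layer2" "a \<in> layer1" "a' \<in> layer1" "a \<noteq> a'"
  shows "E u a \<or> E u a'"
proof (rule ccontr)
  assume "\<not> (E u a \<or> E u a')"
  moreover obtain a0 where "a0 \<in> layer1" "E a0 u"
    using assms(1) by (auto simp: layer2_def)
  ultimately have "has_induced S E 5 fork_edge"
    using assms root layer1_independent
    by (intro has_induced_fork[of v a a' a0 u]) (auto simp: layer1_iff layer2_def adjacent_commute)
  with no_fork show False ..
qed

lemma layer1_three:
  obtains a1 a2 a3 where "a1 \<in> layer1" "a2 \<in> layer1" "a3 \<in> layer1"
    and "a1 \<noteq> a2" "a1 \<noteq> a3" "a2 \<noteq> a3"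
proof -
  obtain T where "T \<subseteq> layer1" "card T = 3"
    using obtain_subset_with_card_n min_degree[OF root] unfolding layer1_def by metis
  with that show ?thesis
    by (auto simp: card_3_iff)
qed

lemma layer2_two_neighbours:
  assumes "u \<in> layer2"
  shows "\<exists>p\<in>layer1. \<exists>q\<in>layer1. p \<noteq> q \<and> E u p \<and> E u q"
proof -
  obtain a1 a2 a3 where a: "a1 \<in> layer1" "a2 \<in> layer1" "a3 \<in> layer1" "a1 \<noteq> a2" "a1 \<noteq> a3" "a2 \<noteq> a3"
    by (rule layer1_three)
  then show ?thesis
    using layer2_adjacent_one_of_two[OF assms] by metis
qed

lemma layer2_common_neighbour:
  assumes "u \<in> layer2" "u' \<in> layer2"
  shows "\<exists>a\<in>layer1. E u a \<and> E u' a"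
proof -
  obtain a1 a2 a3 where a: "a1 \<in> layer1" "a2 \<in> layer1" "a3 \<in> layer1" "a1 \<noteq> a2" "a1 \<noteq> a3" "a2 \<noteq> a3"
    by (rule layer1_three)
  then show ?thesis
    using layer2_adjacent_one_of_two[OF assms(1)] layer2_adjacent_one_of_two[OF assms(2)] by metis
qed

lemma layer2_independent:
  assumes "u \<in> layer2" "u' \<in> layer2"
  shows "\<not> E u u'"
proof -
  obtain a where "a \<in> layer1" "E u a" "E u' a"
    using layer2_common_neighbour[OF assms] by blast
  with assms show ?thesis
    using triangle_free[of u a u'] by (auto simp: layer1_iff layer2_def adjacent_commute)
qed

lemma layer3_adjacent_layer2:
  assumes w: "w \<in> layer3" and u: "u \<in> layer2"
  shows "E w u"
proof (rule ccontr)
  assume "\<not> E w u"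
  obtain u0 where u0: "u0 \<in> layer2" "E u0 w"
    using w by (auto simp: layer3_def)
  obtain a where a: "a \<in> layer1" "E u a" "E u0 a"
    using layer2_common_neighbour[OF u u0(1)] by blast
  have "\<not> E a w"
    using w a(1) by (auto simp: layer1_iff layer2_def layer3_def)
  then have "has_induced S E 5 fork_edge"
    using w u u0 a root \<open>\<not> E w u\<close> layer2_independent[OF u u0(1)]
    by (intro has_induced_fork[of a v u u0 w])
      (auto simp: layer1_iff layer2_def layer3_def adjacent_commute)
  with no_fork show False ..
qed

lemma layer3_independent:
  assumes "w \<in> layer3" "w' \<in> layer3"
  shows "\<not> E w w'"
proof -
  obtain u where "u \<in> layer2" "E u w"
    using assms(1) by (auto simp: layer3_def)
  with assms show ?thesis
    using triangle_free[of w u w'] layer3_adjacent_layer2[of w' u]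
    by (auto simp: layer2_def layer3_def adjacent_commute)
qed

lemma ball_closed:
  assumes x: "x \<in> ball" and z: "z \<in> S" "z \<notin> ball"
  shows "\<not> E x z"
proof
  assume "E x z"
  have "x \<in> layer3"
    using x z \<open>E x z\<close> by (auto simp: ball_def layer1_iff layer2_def layer3_def adjacent_commute)
  then obtain u where u: "u \<in> layer2" "E u x"
    by (auto simp: layer3_def)
  obtain p q where pq: "p \<in> layer1" "q \<in> layer1" "p \<noteq> q" "E u p" "E u q"
    using layer2_two_neighbours[OF u(1)] by blast
  have "has_induced S E 5 fork_edge"
    using \<open>x \<in> layer3\<close> u pq z \<open>E x z\<close> layer1_independent[OF pq(1,2)]
    by (intro has_induced_fork[of u p q x z])
      (auto simp: ball_def layer1_iff layer2_def layer3_def adjacent_commute)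
  with no_fork show False ..
qed

lemma ball_subset: "v \<in> ball" "ball \<subseteq> S"
  using root by (auto simp: ball_def layer1_iff layer2_def layer3_def)

lemma layer1_not_adjacent_layer3: "a \<in> layer1 \<Longrightarrow> w \<in> layer3 \<Longrightarrow> \<not> E a w"
  by (auto simp: layer1_iff layer2_def layer3_def)

lemma layer2_not_adjacent_root: "u \<in> layer2 \<Longrightarrow> \<not> E v u"
  by (simp add: layer2_def)

lemma ball_bipartite: "proper_colouring ball E 2 (\<lambda>y. if y \<in> layer1 \<union> layer3 then 1 else 0)"
proof -
  have odd: "\<not> E x y" if "x \<in> layer1 \<union> layer3" "y \<in> layer1 \<union> layer3" for x y
    using that(1,2)
  proof (elim UnE)
    assume "x \<in> layer3" "y \<in> layer1"
    then show "\<not> E x y"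
      using layer1_not_adjacent_layer3[of y x] sym by blast
  qed (simp_all add: layer1_independent layer3_independent layer1_not_adjacent_layer3)
  have even: "\<not> E x y" if "x \<in> insert v layer2" "y \<in> insert v layer2" for x y
    using that layer2_independent layer2_not_adjacent_root irrefl sym by blast
  have "ball = (layer1 \<union> layer3) \<union> insert v layer2"
    by (auto simp: ball_def)
  with odd even show ?thesis
    unfolding proper_colouring_def by auto
qed

end

context simple_graph
begin

lemma bipartite_component_if_min_degree:
  assumes fin: "finite S" and no_fork: "\<not> has_induced S E 5 fork_edge"
    and diamond: "diamond_free S" and bounded: "clique_bounded S k"
    and deg: "\<forall>y\<in>S. 2 * k - 1 \<le> card (neighbours S y)" and v: "v \<in> S" and "2 \<le> k"
  obtains C c where "v \<in> C" "C \<subseteq> S" "\<forall>x\<in>C. \<forall>y\<in>S - C. \<not> E x y" "proper_colouring C E 2 c"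
proof -
  interpret layers: fork_free_layers E S v
  proof
    show "\<not> E x z" if "x \<in> S" "y \<in> S" "z \<in> S" "E x y" "E y z" for x y z
      using triangle_free_if_min_degree[OF fin no_fork diamond bounded deg that(1-4) _ that(5)]
      by blast
    show "3 \<le> card (neighbours S y)" if "y \<in> S" for y
    proof -
      from deg that have "2 * k - 1 \<le> card (neighbours S y)" ..
      with \<open>2 \<le> k\<close> show ?thesis by linarith
    qed
  qed (use no_fork v in auto)
  have "\<forall>x\<in>layers.ball. \<forall>y\<in>S - layers.ball. \<not> E x y"
    using layers.ball_closed by blast
  with that layers.ball_subset layers.ball_bipartite show ?thesis
    by blast
qed

lemma proper_colouring_diamond_free:
  assumes "finite S" "\<not> has_induced S E 5 fork_edge" "diamond_free S" "clique_bounded S k"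
    and "1 \<le> k"
  shows "\<exists>c. proper_colouring S E (2 * k - 1) c"
  using assms(1-4)
proof (induction S rule: finite_psubset_induct)
  case (psubset S)
  have IH: "\<exists>c. proper_colouring T E (2 * k - 1) c" if "T \<subset> S" for T
  proof -
    from that have "T \<subseteq> S" by blast
    show ?thesis
      by (rule "psubset.IH"[OF that not_has_induced_subset[OF "psubset.prems"(1) \<open>T \<subseteq> S\<close>]
            diamond_free_subset[OF "psubset.prems"(2) \<open>T \<subseteq> S\<close>]
            clique_bounded_subset[OF "psubset.prems"(3) \<open>T \<subseteq> S\<close>]])
  qed
  consider "S = {}" | v where "v \<in> S" "card (neighbours S v) < 2 * k - 1"
    | v where "v \<in> S" "\<forall>y\<in>S. 2 * k - 1 \<le> card (neighbours S y)"
    by (meson all_not_in_conv not_le)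
  then show ?case
  proof cases
    case 1
    then show ?thesis
      using proper_colouring_empty by blast
  next
    case (2 v)
    then have "S - {v} \<subset> S" by blast
    then obtain c where "proper_colouring (S - {v}) E (2 * k - 1) c"
      using IH by blast
    then show ?thesis
      using proper_colouring_insert_vertex[OF "psubset.hyps" 2(1) _ 2(2)] by blast
  next
    case (3 v)
    with assms(5) have "neighbours S v \<noteq> {}"
      by fastforce
    then obtain y where "y \<in> S" "E v y"
      by (auto simp: neighbours_def)
    then have "card (common_neighbours S v y) + 2 \<le> k"
      by (rule card_common_neighbours[OF "psubset.hyps" "psubset.prems"(2,3) 3(1)])
    then have "2 \<le> k"
      by linarith
    obtain C b where C: "v \<in> C" "C \<subseteq> S" "\<forall>x\<in>C. \<forall>y\<in>S - C. \<not> E x y"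
      and b: "proper_colouring C E 2 b"
      by (rule bipartite_component_if_min_degree[OF "psubset.hyps" "psubset.prems" 3(2,1) \<open>2 \<le> k\<close>])
    have "S - C \<subset> S"
      using C(1,2) by blast
    then obtain c where "proper_colouring (S - C) E (2 * k - 1) c"
      using IH by blast
    moreover have "proper_colouring C E (2 * k - 1) b"
      using proper_colouring_mono[OF b] \<open>2 \<le> k\<close> by simp
    ultimately show ?thesis
      using proper_colouring_Un_separated C(3) by blast
  qed
qed

lemma proper_colouring_fork_cocricket_free:
  assumes "finite S" "\<not> has_induced S E 5 fork_edge" "\<not> has_induced S E 5 cocricket_edge"
    and "clique_bounded S w"
  shows "\<exists>c. proper_colouring S E (w\<^sup>2) c"
  using assms
proof (induction S arbitrary: w rule: finite_psubset_induct)
  case (psubset S)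
  show ?case
  proof (cases "S = {}")
    case True
    then show ?thesis
      using proper_colouring_empty by blast
  next
    case False
    then obtain v where v: "v \<in> S" by blast
    have "clique E {v}" "{v} \<subseteq> S"
      using v by (simp_all add: clique_def)
    then have "card {v} \<le> w"
      using "psubset.prems"(3) unfolding clique_bounded_def by blast
    then have "1 \<le> w"
      by simp
    let ?N = "neighbours S v"
    have N: "?N \<subset> S" "?N \<subseteq> S"
      using v irrefl by (auto simp: neighbours_def)
    obtain c where c: "proper_colouring ?N E ((w - 1)\<^sup>2) c"
      using "psubset.IH"[OF N(1) not_has_induced_subset[OF "psubset.prems"(1) N(2)]
          not_has_induced_subset[OF "psubset.prems"(2) N(2)]
          clique_bounded_neighbours[OF "psubset.hyps" "psubset.prems"(3) v]]
      by blast
    have "S - ?N \<subseteq> S" "finite (S - ?N)"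
      using "psubset.hyps" by auto
    then obtain d where d: "proper_colouring (S - ?N) E (2 * w - 1) d"
      using proper_colouring_diamond_free[OF _ not_has_induced_subset[OF "psubset.prems"(1)]
          diamond_free_non_neighbours[OF "psubset.prems"(2) v]
          clique_bounded_subset[OF "psubset.prems"(3)] \<open>1 \<le> w\<close>]
      by blast
    have "(w - 1)\<^sup>2 + (2 * w - 1) = w\<^sup>2"
      using \<open>1 \<le> w\<close> by (cases w) (simp_all add: power2_eq_square)
    then show ?thesis
      using proper_colouring_Un_shift[OF c d] by auto
  qed
qed

end

theorem corollary3p18:
  fixes V :: "'a set" and E :: "'a \<Rightarrow> 'a \<Rightarrow> bool"
  assumes "graph V E"
    and "\<not> has_induced V E 5 fork_edge"
    and "\<not> has_induced V E 5 cocricket_edge"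
  shows "chromatic_number V E \<le> (clique_number V E) ^ 2"
proof -
  from assms(1) have "finite V" "simple_graph E"
    unfolding graph_def simple_graph_def by blast+
  then interpret simple_graph E by simp
  have "\<exists>c. proper_colouring V E ((clique_number V E)\<^sup>2) c"
    by (rule proper_colouring_fork_cocricket_free[OF \<open>finite V\<close> assms(2,3)
          clique_bounded_clique_number[OF \<open>finite V\<close>]])
  then show ?thesis
    unfolding chromatic_number_def by (rule Least_le)
qed

end
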